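(* For every $d\in\mathbb{Z}^+$, every 1-aware population protocol computing the predicate $R\colon\mathbb{Z}^+\to\{0,1\}$, $R(n)=\mathbb{I}\{n\ge d\}$ (i.e. $R(n)=1$ if $n\ge d$ and $R(n)=0$ otherwise), has at least $\log_2 d+1$ states.
   Context: A population protocol is a tuple $\Pi=\langle Q,Q_0,Q_1,q_{init},\delta\rangle$ where $Q$ is a finite set of states, $Q=Q_0\sqcup Q_1$ (disjoint union), $q_{init}\in Q$ is the initial state, and $\delta\colon Q^2\to 2^{Q^2}\setminus\{\varnothing\}$ is the transition function. For $n\in\mathbb{Z}^+$, an $n$-size configuration is a function $C\colon[n]\to Q$, where $[n]=\{1,\dots,n\}$; the initial configuration $I_n$ maps every element to $q_{init}$. A pair $(C_1,C_2)$ of $n$-size configurations is a transition if there are distinct $i,j\in[n]$ with $(C_2(i),C_2(j))\in\delta(C_1(i),C_1(j))$ and $C_2(k)=C_1(k)$ for all $k\ne i,j$ (the pair $(i,j)$ is ordered). $D$ is reachable from $C$ if there is a finite sequence $C=C_1,\dots,C_k=D$ ($k\ge1$) of configurations with each $(C_i,C_{i+1})$ a transition. An execution is an infinite sequence $(C_i)_{i\ge1}$ with $C_1=I_n$ for some $n$ and each $(C_i,C_{i+1})$ a transition; it is fair if whenever a configuration $C$ occurs infinitely often in it and $D$ is reachable from $C$, then $D$ also occurs infinitely often. $\Pi$ is a 1-aware population protocol computing $R\colon\mathbb{Z}^+\to\{0,1\}$ if for every $n\in\mathbb{Z}^+$: if $R(n)=0$ then every configuration $C$ reachable from $I_n$ satisfies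 $C([n])\subseteq Q_0$; and if $R(n)=1$ then for every fair execution $(C_i)_{i\ge1}$ with $C_1=I_n$ there is $i_0$ such that $C_i([n])\subseteq Q_1$ for all $i\ge i_0$. The number of states of $\Pi$ is $|Q|$. *)

theory Defs
  imports Complex_Main
begin

text \<open>A population protocol: state set Q (finite), partition Q = Q0 disjoint-union Q1,
initial state qi, and transition function delta : Q^2 -> nonempty subsets of Q^2.
Configurations of size n are functions nat => 'q; only the values on {1..n} matter
(transitions leave all other positions unchanged, and the initial configuration is
constantly qi).\<close>

definition pop_protocol :: "'q set \<Rightarrow> 'q set \<Rightarrow> 'q set \<Rightarrow> 'q \<Rightarrow> ('q \<Rightarrow> 'q \<Rightarrow> ('q \<times> 'q) set) \<Rightarrow> bool" where
  "pop_protocol Q Q0 Q1 qi \<delta> \<longleftrightarrow>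
     finite Q \<and> Q = Q0 \<union> Q1 \<and> Q0 \<inter> Q1 = {} \<and> qi \<in> Q \<and>
     (\<forall>p\<in>Q. \<forall>q\<in>Q. \<delta> p q \<subseteq> Q \<times> Q \<and> \<delta> p q \<noteq> {})"

definition init_config :: "'q \<Rightarrow> nat \<Rightarrow> 'q" where
  "init_config qi = (\<lambda>_. qi)"

definition transition :: "('q \<Rightarrow> 'q \<Rightarrow> ('q \<times> 'q) set) \<Rightarrow> nat \<Rightarrow> (nat \<Rightarrow> 'q) \<Rightarrow> (nat \<Rightarrow> 'q) \<Rightarrow> bool" where
  "transition \<delta> n C1 C2 \<longleftrightarrow>
     (\<exists>i j. i \<in> {1..n} \<and> j \<in> {1..n} \<and> i \<noteq> j \<and>
        (C2 i, C2 j) \<in> \<delta> (C1 i) (C1 j) \<and> (\<forall>k. k \<noteq> i \<and> k \<noteq> j \<longrightarrow> C2 k = C1 k))"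

definition reachable :: "('q \<Rightarrow> 'q \<Rightarrow> ('q \<times> 'q) set) \<Rightarrow> nat \<Rightarrow> (nat \<Rightarrow> 'q) \<Rightarrow> (nat \<Rightarrow> 'q) \<Rightarrow> bool" where
  "reachable \<delta> n C D \<longleftrightarrow> (transition \<delta> n)\<^sup>*\<^sup>* C D"

definition execution :: "'q \<Rightarrow> ('q \<Rightarrow> 'q \<Rightarrow> ('q \<times> 'q) set) \<Rightarrow> nat \<Rightarrow> (nat \<Rightarrow> nat \<Rightarrow> 'q) \<Rightarrow> bool" where
  "execution qi \<delta> n E \<longleftrightarrow> E 0 = init_config qi \<and> (\<forall>t. transition \<delta> n (E t) (E (Suc t)))"

definition fair :: "('q \<Rightarrow> 'q \<Rightarrow> ('q \<times> 'q) set) \<Rightarrow> nat \<Rightarrow> (nat \<Rightarrow> nat \<Rightarrow> 'q) \<Rightarrow> bool" where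
  "fair \<delta> n E \<longleftrightarrow>
     (\<forall>C D. infinite {t. E t = C} \<and> reachable \<delta> n C D \<longrightarrow> infinite {t. E t = D})"

definition one_aware_computes ::
  "'q set \<Rightarrow> 'q set \<Rightarrow> 'q set \<Rightarrow> 'q \<Rightarrow> ('q \<Rightarrow> 'q \<Rightarrow> ('q \<times> 'q) set) \<Rightarrow> (nat \<Rightarrow> bool) \<Rightarrow> bool" where
  "one_aware_computes Q Q0 Q1 qi \<delta> R \<longleftrightarrow>
     pop_protocol Q Q0 Q1 qi \<delta> \<and>
     (\<forall>n\<ge>1.
        (\<not> R n \<longrightarrow> (\<forall>C. reachable \<delta> n (init_config qi) C \<longrightarrow> C ` {1..n} \<subseteq> Q0)) \<and>
        (R n \<longrightarrow> (\<forall>E. execution qi \<delta> n E \<and> fair \<delta> n E \<longrightarrow>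
                      (\<exists>t0. \<forall>t\<ge>t0. E t ` {1..n} \<subseteq> Q1))))"

end

theory Submission
  imports Defs "HOL-Library.Omega_Words_Fun"
begin

text \<open>Let P(N) be the set of states occurring in configurations reachable from the initial
configuration of N agents. Reachable configurations of a and of b agents can be run side by side
as one configuration of a + b agents, so a transition between a state of P(a) and a state of P(b)
produces states of P(a + b). Hence once P(2N) is contained in P(N), no population of any size
produces a state outside P(N). As q_init lies in P(1) and the chain P(1), P(2), P(4), ... of
subsets of Q grows strictly until it stops, every P(M) is contained in P(2^(|Q|-1)).
If d > 2^(|Q|-1), a fair execution of d agents eventually consists of states of Q1; such a state
then also occurs in a reachable configuration of 2^(|Q|-1) < d agents, all of whose states lie
in Q0.\<close>

lemma successively_append_join:
  "successively R (xs @ [y]) \<Longrightarrow> successively R (y # ys) \<Longrightarrow> successively R (xs @ y # ys)"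
  by (simp add: successively_append_iff)

lemma tranclp_conv_successively:
  "R\<^sup>+\<^sup>+ x y \<longleftrightarrow> (\<exists>xs. successively R (x # xs @ [y]))"
proof
  assume "R\<^sup>+\<^sup>+ x y"
  then show "\<exists>xs. successively R (x # xs @ [y])"
  proof (induction rule: tranclp_induct)
    case (base y)
    then show ?case by (intro exI[of _ "[]"]) simp
  next
    case (step y z)
    then obtain xs where "successively R (x # xs @ [y])" by blast
    with \<open>R y z\<close> have "successively R (x # (xs @ [y]) @ [z])"
      using successively_append_join[of R "x # xs" y "[z]"] by simp
    then show ?case by blast
  qed
next
  assume "\<exists>xs. successively R (x # xs @ [y])"
  then obtain xs where "successively R (x # xs @ [y])" by blast
  then show "R\<^sup>+\<^sup>+ x y"
    by (induction xs arbitrary: x) (auto intro: tranclp_into_tranclp2)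
qed

lemma successively_Cons_rtranclp:
  assumes "successively R (x # xs)" "y \<in> set xs"
  shows "R\<^sup>*\<^sup>* x y"
proof -
  obtain ys zs where "xs = ys @ y # zs" using split_list[OF assms(2)] by blast
  with assms(1) have "successively R ((x # ys @ [y]) @ zs)" by simp
  then have "successively R (x # ys @ [y])" by (simp only: successively_append_iff)
  then show ?thesis using tranclp_conv_successively by (metis tranclp_into_rtranclp)
qed

lemma rtranclp_bottom_exists:
  assumes "finite {y. R\<^sup>*\<^sup>* x y}"
  obtains b where "R\<^sup>*\<^sup>* x b" "\<And>y. R\<^sup>*\<^sup>* b y \<Longrightarrow> R\<^sup>*\<^sup>* y b"
proof -
  obtain b where b: "R\<^sup>*\<^sup>* x b"
    and least: "\<And>c. R\<^sup>*\<^sup>* x c \<Longrightarrow> card {y. R\<^sup>*\<^sup>* b y} \<le> card {y. R\<^sup>*\<^sup>* c y}"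
    using ex_has_least_nat[of "R\<^sup>*\<^sup>* x" x "\<lambda>c. card {y. R\<^sup>*\<^sup>* c y}"] by blast
  have "R\<^sup>*\<^sup>* y b" if "R\<^sup>*\<^sup>* b y" for y
  proof -
    have sub: "{z. R\<^sup>*\<^sup>* y z} \<subseteq> {z. R\<^sup>*\<^sup>* b z}" using that by auto
    have "{z. R\<^sup>*\<^sup>* b z} \<subseteq> {z. R\<^sup>*\<^sup>* x z}" using b by auto
    then have "finite {z. R\<^sup>*\<^sup>* b z}" using assms by (rule finite_subset)
    with sub least[of y] b that have "{z. R\<^sup>*\<^sup>* y z} = {z. R\<^sup>*\<^sup>* b z}"
      by (meson card_seteq rtranclp_trans)
    then show ?thesis by auto
  qed
  with b that show ?thesis by blast
qed

lemma bottom_closed_walk: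
  assumes fin: "finite {y. R\<^sup>*\<^sup>* b y}" and bottom: "\<And>y. R\<^sup>*\<^sup>* b y \<Longrightarrow> R\<^sup>*\<^sup>* y b"
    and "R b b'"
  obtains cs where "successively R (b # cs @ [b])" "set (b # cs) = {y. R\<^sup>*\<^sup>* b y}"
proof -
  have loop: "R\<^sup>+\<^sup>+ b b"
    using \<open>R b b'\<close> bottom[of b'] by (auto intro: rtranclp_into_tranclp2)
  have through: "\<exists>cs. successively R (b # cs @ [b]) \<and> s \<in> set (b # cs)"
    if "R\<^sup>*\<^sup>* b s" for s
  proof (cases "s = b")
    case True
    then show ?thesis using loop tranclp_conv_successively[of R b b] by auto
  next
    case False
    then have "R\<^sup>+\<^sup>+ b s" using that by (auto dest: rtranclpD)
    then obtain xs where xs: "successively R (b # xs @ [s])"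
      using tranclp_conv_successively by metis
    have "R\<^sup>+\<^sup>+ s b" using bottom[OF that] loop by (rule rtranclp_tranclp_tranclp)
    then obtain ys where ys: "successively R (s # ys @ [b])"
      using tranclp_conv_successively by metis
    from xs ys have "successively R (b # (xs @ s # ys) @ [b])"
      using successively_append_join[of R "b # xs" s "ys @ [b]"] by simp
    then show ?thesis by (intro exI[of _ "xs @ s # ys"]) simp
  qed
  have "\<exists>cs. successively R (b # cs @ [b]) \<and> T \<subseteq> set (b # cs)"
    if "finite T" "T \<subseteq> {y. R\<^sup>*\<^sup>* b y}" for T
    using that
  proof (induction T rule: finite_induct)
    case empty
    then show ?case using through[of b] by blast
  next
    case (insert s T)
    then obtain cs ds where cs: "successively R (b # cs @ [b])" "T \<subseteq> set (b # cs)"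
      and ds: "successively R (b # ds @ [b])" "s \<in> set (b # ds)"
      using through[of s] by auto
    from cs(1) ds(1) have "successively R (b # (cs @ b # ds) @ [b])"
      using successively_append_join[of R "b # cs" b "ds @ [b]"] by simp
    moreover have "insert s T \<subseteq> set (b # cs @ b # ds)" using cs(2) ds(2) by auto
    ultimately show ?case by (metis append.assoc append_Cons)
  qed
  then obtain cs where cs: "successively R (b # cs @ [b])" "{y. R\<^sup>*\<^sup>* b y} \<subseteq> set (b # cs)"
    using fin by blast
  have "set (b # cs) \<subseteq> {y. R\<^sup>*\<^sup>* b y}"
    using successively_Cons_rtranclp[OF cs(1)] by auto
  with cs that show ?thesis by blast
qed

lemma iter_successively:
  assumes "successively R (c @ [hd c])" "c \<noteq> []"
  shows "R (c\<^sup>\<omega> i) (c\<^sup>\<omega> (Suc i))"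
proof -
  define j where "j = i mod length c"
  have j: "j < length c" using assms(2) by (simp add: j_def)
  have "c\<^sup>\<omega> (Suc i) = (c @ [hd c]) ! Suc j"
  proof (cases "Suc j = length c")
    case True
    then show ?thesis using assms(2) by (simp add: j_def mod_Suc hd_conv_nth)
  next
    case False
    with j have "Suc j < length c" by simp
    then show ?thesis using assms(2) by (simp add: j_def mod_Suc nth_append)
  qed
  moreover have "c\<^sup>\<omega> i = (c @ [hd c]) ! j" using assms(2) j by (simp add: j_def nth_append)
  ultimately show ?thesis using successively_nth[OF assms(1)] j by simp
qed

lemma conc_successively:
  assumes "successively R (w @ [x 0])" "\<And>i. R (x i) (x (Suc i))"
  shows "R ((w \<frown> x) i) ((w \<frown> x) (Suc i))"
proof (cases "i < length w")
  case True
  then have "(w \<frown> x) i = (w @ [x 0]) ! i" "(w \<frown> x) (Suc i) = (w @ [x 0]) ! Suc i"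
    by (auto simp: conc_def nth_append)
  then show ?thesis using successively_nth[OF assms(1)] True by simp
next
  case False
  then have "Suc i - length w = Suc (i - length w)" by simp
  then show ?thesis using False assms(2) by (simp add: conc_def)
qed

text \<open>The run walks into a bottom strongly connected component of the reachability graph and
then traverses a closed walk through all of that component forever.\<close>

lemma fair_run_exists:
  assumes fin: "finite {y. R\<^sup>*\<^sup>* x y}" and total: "\<And>y. R\<^sup>*\<^sup>* x y \<Longrightarrow> \<exists>z. R y z"
  obtains E where "E 0 = x" "\<And>t. R (E t) (E (Suc t))"
    "\<And>C D. infinite {t. E t = C} \<Longrightarrow> R\<^sup>*\<^sup>* C D \<Longrightarrow> infinite {t. E t = D}"
proof -
  obtain b where xb: "R\<^sup>*\<^sup>* x b" and bottom: "\<And>y. R\<^sup>*\<^sup>* b y \<Longrightarrow> R\<^sup>*\<^sup>* y b"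
    using rtranclp_bottom_exists[OF fin] by blast
  obtain b' where "R b b'" using total[OF xb] by blast
  have "{y. R\<^sup>*\<^sup>* b y} \<subseteq> {y. R\<^sup>*\<^sup>* x y}" using xb by auto
  then have "finite {y. R\<^sup>*\<^sup>* b y}" using fin by (rule finite_subset)
  then obtain cs where cycle: "successively R (b # cs @ [b])" "set (b # cs) = {y. R\<^sup>*\<^sup>* b y}"
    using bottom_closed_walk[of R b] bottom \<open>R b b'\<close> by blast
  obtain w where w: "successively R (w @ [b])" "hd (w @ [b]) = x"
  proof (cases "x = b")
    case True
    then show ?thesis using that[of "[]"] by simp
  next
    case False
    with xb have "R\<^sup>+\<^sup>+ x b" by (auto dest: rtranclpD)
    then obtain xs where "successively R (x # xs @ [b])"
      unfolding tranclp_conv_successively by blast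
    then show ?thesis using that[of "x # xs"] by simp
  qed
  define E where "E = w \<frown> (b # cs)\<^sup>\<omega>"
  have recurrent: "infinite {t. E t = C} \<longleftrightarrow> R\<^sup>*\<^sup>* b C" for C
  proof -
    have "limit E = {y. R\<^sup>*\<^sup>* b y}" using cycle(2) by (simp add: E_def)
    then show ?thesis using limit_vimage[of C E] by (simp add: vimage_def)
  qed
  have "E 0 = x" using w(2) by (cases w) (simp_all add: E_def)
  moreover have "R (E t) (E (Suc t))" for t
  proof -
    have "R ((b # cs)\<^sup>\<omega> i) ((b # cs)\<^sup>\<omega> (Suc i))" for i
      by (rule iter_successively) (use cycle(1) in simp_all)
    moreover have "successively R (w @ [(b # cs)\<^sup>\<omega> 0])" using w(1) by simp
    ultimately show ?thesis unfolding E_def by (rule conc_successively[rotated])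
  qed
  moreover have "infinite {t. E t = D}" if "infinite {t. E t = C}" "R\<^sup>*\<^sup>* C D" for C D
    using that recurrent rtranclp_trans[of R b C D] by blast
  ultimately show ?thesis by (rule that)
qed

lemma transition_mono:
  "transition \<delta> a C D \<Longrightarrow> a \<le> b \<Longrightarrow> transition \<delta> b C D"
  unfolding transition_def by (meson atLeastAtMost_iff le_trans)

lemma reachable_mono:
  "reachable \<delta> a C D \<Longrightarrow> a \<le> b \<Longrightarrow> reachable \<delta> b C D"
  unfolding reachable_def
  by (induction rule: rtranclp_induct) (auto intro: rtranclp.rtrancl_into_rtrancl transition_mono)

lemma reachable_init_outside:
  assumes "reachable \<delta> n (init_config qi) C" "k \<notin> {1..n}"
  shows "C k = qi"
  using assms(1) unfolding reachable_def
proof (induction rule: rtranclp_induct)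
  case base
  then show ?case by (simp add: init_config_def)
next
  case (step C D)
  then show ?case using assms(2) unfolding transition_def by metis
qed

lemma reachable_init_in_states:
  assumes "pop_protocol Q Q0 Q1 qi \<delta>" "reachable \<delta> n (init_config qi) C"
  shows "C k \<in> Q"
  using assms(2) unfolding reachable_def
proof (induction arbitrary: k rule: rtranclp_induct)
  case base
  have "qi \<in> Q" using assms(1) unfolding pop_protocol_def by blast
  then show ?case by (simp add: init_config_def)
next
  case (step C D)
  then obtain i j where ij: "(D i, D j) \<in> \<delta> (C i) (C j)" "\<forall>k. k \<noteq> i \<and> k \<noteq> j \<longrightarrow> D k = C k"
    unfolding transition_def by blast
  have "\<delta> (C i) (C j) \<subseteq> Q \<times> Q" using assms(1) step.IH unfolding pop_protocol_def by blast
  then show ?case using ij step.IH by (cases "k = i \<or> k = j") auto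
qed

lemma finite_reachable_configs:
  assumes "pop_protocol Q Q0 Q1 qi \<delta>"
  shows "finite {C. reachable \<delta> n (init_config qi) C}"
proof (rule finite_subset)
  show "{C. reachable \<delta> n (init_config qi) C}
      \<subseteq> {C. \<forall>k. (k \<in> {1..n} \<longrightarrow> C k \<in> Q) \<and> (k \<notin> {1..n} \<longrightarrow> C k = qi)}"
    by (auto intro: reachable_init_in_states[OF assms] reachable_init_outside)
  have "finite Q" using assms unfolding pop_protocol_def by blast
  then show "finite {C. \<forall>k. (k \<in> {1..n} \<longrightarrow> C k \<in> Q) \<and> (k \<notin> {1..n} \<longrightarrow> C k = qi)}"
    by (intro finite_set_of_finite_funs) simp_all
qed

lemma transition_exists:
  assumes "pop_protocol Q Q0 Q1 qi \<delta>" "n \<ge> 2" "reachable \<delta> n (init_config qi) C"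
  shows "\<exists>D. transition \<delta> n C D"
proof -
  have "C 1 \<in> Q" "C 2 \<in> Q" using reachable_init_in_states[OF assms(1,3)] by blast+
  then have "\<delta> (C 1) (C 2) \<noteq> {}" using assms(1) unfolding pop_protocol_def by blast
  then obtain u v where "(u, v) \<in> \<delta> (C 1) (C 2)" by auto
  then have "transition \<delta> n C (C(1 := u, 2 := v))"
    unfolding transition_def using assms(2) by (intro exI[of _ 1] exI[of _ 2]) auto
  then show ?thesis by blast
qed

lemma fair_execution_exists:
  assumes "pop_protocol Q Q0 Q1 qi \<delta>" "n \<ge> 2"
  obtains E where "execution qi \<delta> n E" "fair \<delta> n E"
proof -
  have fin: "finite {C. (transition \<delta> n)\<^sup>*\<^sup>* (init_config qi) C}"
    using finite_reachable_configs[OF assms(1)] unfolding reachable_def .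
  have total: "\<And>C. (transition \<delta> n)\<^sup>*\<^sup>* (init_config qi) C \<Longrightarrow> \<exists>D. transition \<delta> n C D"
    using transition_exists[OF assms] unfolding reachable_def .
  show ?thesis
  proof (rule fair_run_exists[OF fin total])
    fix E
    assume "E 0 = init_config qi" "\<And>t. transition \<delta> n (E t) (E (Suc t))"
      "\<And>C D. infinite {t. E t = C} \<Longrightarrow> (transition \<delta> n)\<^sup>*\<^sup>* C D \<Longrightarrow> infinite {t. E t = D}"
    then show thesis using that unfolding execution_def fair_def reachable_def by blast
  qed
qed

lemma execution_reachable:
  assumes "execution qi \<delta> n E"
  shows "reachable \<delta> n (init_config qi) (E t)"
proof (induction t)
  case 0
  then show ?case using assms unfolding execution_def reachable_def by simp
next
  case (Suc t)
  then show ?case using assms unfolding execution_def reachable_def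
    by (meson rtranclp.rtrancl_into_rtrancl)
qed

definition juxtapose :: "nat \<Rightarrow> (nat \<Rightarrow> 'q) \<Rightarrow> (nat \<Rightarrow> 'q) \<Rightarrow> nat \<Rightarrow> 'q" where
  "juxtapose a C D = (\<lambda>k. if k \<le> a then C k else D (k - a))"

lemma transition_juxtapose:
  assumes "transition \<delta> b C D"
  shows "transition \<delta> (a + b) (juxtapose a Z C) (juxtapose a Z D)"
proof -
  obtain i j where ij: "i \<in> {1..b}" "j \<in> {1..b}" "i \<noteq> j" "(D i, D j) \<in> \<delta> (C i) (C j)"
    "\<forall>k. k \<noteq> i \<and> k \<noteq> j \<longrightarrow> D k = C k"
    using assms unfolding transition_def by blast
  have "juxtapose a Z D k = juxtapose a Z C k" if "k \<noteq> a + i" "k \<noteq> a + j" for k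
    using that ij(5)[rule_format, of "k - a"] by (cases "k \<le> a") (auto simp: juxtapose_def, linarith+)
  then show ?thesis unfolding transition_def
    using ij(1-4) by (intro exI[of _ "a + i"] exI[of _ "a + j"]) (auto simp: juxtapose_def)
qed

lemma reachable_juxtapose:
  "reachable \<delta> b C D \<Longrightarrow> reachable \<delta> (a + b) (juxtapose a Z C) (juxtapose a Z D)"
  unfolding reachable_def
  by (induction rule: rtranclp_induct) (auto intro: rtranclp.rtrancl_into_rtrancl transition_juxtapose)

lemma reachable_init_juxtapose:
  assumes "reachable \<delta> a (init_config qi) C" "reachable \<delta> b (init_config qi) D"
  shows "reachable \<delta> (a + b) (init_config qi) (juxtapose a C D)"
proof -
  have "juxtapose a C (init_config qi) = C"
    using reachable_init_outside[OF assms(1)] by (auto simp: juxtapose_def init_config_def)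
  then have "reachable \<delta> (a + b) C (juxtapose a C D)"
    using reachable_juxtapose[OF assms(2), of a C] by simp
  moreover have "reachable \<delta> (a + b) (init_config qi) C" using reachable_mono[OF assms(1)] by simp
  ultimately show ?thesis unfolding reachable_def by (rule rtranclp_trans[rotated])
qed

definition producible :: "('q \<Rightarrow> 'q \<Rightarrow> ('q \<times> 'q) set) \<Rightarrow> 'q \<Rightarrow> nat \<Rightarrow> 'q set" where
  "producible \<delta> qi N = {q. \<exists>C. reachable \<delta> N (init_config qi) C \<and> q \<in> C ` {1..N}}"

lemma producible_mono: "N \<le> M \<Longrightarrow> producible \<delta> qi N \<subseteq> producible \<delta> qi M"
  unfolding producible_def using reachable_mono by fastforce

lemma init_producible: "N \<ge> 1 \<Longrightarrow> qi \<in> producible \<delta> qi N"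
  unfolding producible_def reachable_def by (auto simp: init_config_def intro!: exI[of _ "init_config qi"])

lemma producible_subset_states:
  assumes "pop_protocol Q Q0 Q1 qi \<delta>"
  shows "producible \<delta> qi N \<subseteq> Q"
  using reachable_init_in_states[OF assms] unfolding producible_def by blast

lemma finite_producible:
  assumes "pop_protocol Q Q0 Q1 qi \<delta>"
  shows "finite (producible \<delta> qi N)"
proof (rule finite_subset)
  show "producible \<delta> qi N \<subseteq> Q" using assms by (rule producible_subset_states)
  show "finite Q" using assms unfolding pop_protocol_def by blast
qed

lemma producible_transition:
  assumes "p \<in> producible \<delta> qi a" "p' \<in> producible \<delta> qi b" "(q, q') \<in> \<delta> p p'"
  shows "q \<in> producible \<delta> qi (a + b)" "q' \<in> producible \<delta> qi (a + b)"
proof -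
  obtain C i where C: "reachable \<delta> a (init_config qi) C" "i \<in> {1..a}" "p = C i"
    using assms(1) unfolding producible_def by blast
  obtain D j where D: "reachable \<delta> b (init_config qi) D" "j \<in> {1..b}" "p' = D j"
    using assms(2) unfolding producible_def by blast
  define H where "H = (juxtapose a C D)(i := q, a + j := q')"
  have "transition \<delta> (a + b) (juxtapose a C D) H"
    unfolding transition_def using C D assms(3)
    by (intro exI[of _ i] exI[of _ "a + j"]) (auto simp: H_def juxtapose_def)
  then have "reachable \<delta> (a + b) (init_config qi) H"
    using reachable_init_juxtapose[OF C(1) D(1)] unfolding reachable_def by simp
  moreover have "H i = q" "H (a + j) = q'" "i \<in> {1..a + b}" "a + j \<in> {1..a + b}"
    using C(2) D(2) by (auto simp: H_def)
  ultimately show "q \<in> producible \<delta> qi (a + b)" "q' \<in> producible \<delta> qi (a + b)"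
    unfolding producible_def by (metis (mono_tags) image_eqI mem_Collect_eq)+
qed

lemma producible_stable:
  assumes "N \<ge> 1" "producible \<delta> qi (N + N) \<subseteq> producible \<delta> qi N"
  shows "producible \<delta> qi M \<subseteq> producible \<delta> qi N"
proof
  fix q assume "q \<in> producible \<delta> qi M"
  then obtain C where C: "reachable \<delta> M (init_config qi) C" "q \<in> C ` {1..M}"
    unfolding producible_def by blast
  have "C k \<in> producible \<delta> qi N" for k
    using C(1) unfolding reachable_def
  proof (induction arbitrary: k rule: rtranclp_induct)
    case base
    then show ?case using init_producible[OF assms(1)] by (simp add: init_config_def)
  next
    case (step C D)
    then obtain i j where ij: "(D i, D j) \<in> \<delta> (C i) (C j)" "\<forall>k. k \<noteq> i \<and> k \<noteq> j \<longrightarrow> D k = C k"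
      unfolding transition_def by blast
    have "D i \<in> producible \<delta> qi (N + N)" "D j \<in> producible \<delta> qi (N + N)"
      using producible_transition[OF step.IH step.IH ij(1)] by simp_all
    then show ?case using assms(2) ij(2) step.IH by (cases "k = i \<or> k = j") auto
  qed
  then show "q \<in> producible \<delta> qi N" using C(2) by auto
qed

lemma producible_stable_or_card_ge:
  assumes "pop_protocol Q Q0 Q1 qi \<delta>"
  shows "(\<forall>M. producible \<delta> qi M \<subseteq> producible \<delta> qi (2 ^ k)) \<or> k + 1 \<le> card (producible \<delta> qi (2 ^ k))"
proof (induction k)
  case 0
  have "qi \<in> producible \<delta> qi 1" by (rule init_producible) simp
  then show ?case using finite_producible[OF assms] by (auto simp: Suc_le_eq card_gt_0_iff)
next
  case (Suc k)
  let ?P = "producible \<delta> qi"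
  have grow: "?P (2 ^ k) \<subseteq> ?P (2 ^ Suc k)" by (rule producible_mono) simp
  show ?case
  proof (cases "?P (2 ^ Suc k) \<subseteq> ?P (2 ^ k)")
    case True
    then have "?P (2 ^ k + 2 ^ k) \<subseteq> ?P (2 ^ k)" by (simp only: power_Suc mult_2)
    then have "?P M \<subseteq> ?P (2 ^ k)" for M by (rule producible_stable[rotated]) simp
    with grow show ?thesis by blast
  next
    case False
    with grow have "?P (2 ^ k) \<subset> ?P (2 ^ Suc k)" by blast
    then have "card (?P (2 ^ k)) < card (?P (2 ^ Suc k))"
      using finite_producible[OF assms] by (rule psubset_card_mono[rotated])
    moreover have "\<not> (\<forall>M. ?P M \<subseteq> ?P (2 ^ k))" using False by blast
    ultimately show ?thesis using Suc.IH by auto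
  qed
qed

lemma pop_protocol_card_ge_1:
  assumes "pop_protocol Q Q0 Q1 qi \<delta>"
  shows "card Q \<ge> 1"
proof -
  have "finite Q" "qi \<in> Q" using assms unfolding pop_protocol_def by blast+
  then show ?thesis by (simp add: Suc_le_eq card_gt_0_iff) blast
qed

lemma producible_subset_pow2:
  assumes "pop_protocol Q Q0 Q1 qi \<delta>"
  shows "producible \<delta> qi M \<subseteq> producible \<delta> qi (2 ^ (card Q - 1))"
proof -
  have "finite Q" using assms unfolding pop_protocol_def by blast
  consider "\<forall>M. producible \<delta> qi M \<subseteq> producible \<delta> qi (2 ^ (card Q - 1))"
    | "card Q \<le> card (producible \<delta> qi (2 ^ (card Q - 1)))"
    using producible_stable_or_card_ge[OF assms, of "card Q - 1"] by auto
  then show ?thesis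
  proof cases
    case 2
    then have "producible \<delta> qi (2 ^ (card Q - 1)) = Q"
      using producible_subset_states[OF assms] \<open>finite Q\<close> by (intro card_seteq) simp_all
    then show ?thesis using producible_subset_states[OF assms] by blast
  qed blast
qed

lemma producible_subset_Q0:
  assumes "one_aware_computes Q Q0 Q1 qi \<delta> R" "N \<ge> 1" "\<not> R N"
  shows "producible \<delta> qi N \<subseteq> Q0"
  using assms unfolding one_aware_computes_def producible_def by blast

lemma producible_meets_Q1:
  assumes "one_aware_computes Q Q0 Q1 qi \<delta> R" "n \<ge> 2" "R n"
  shows "producible \<delta> qi n \<inter> Q1 \<noteq> {}"
proof -
  have "pop_protocol Q Q0 Q1 qi \<delta>" using assms(1) unfolding one_aware_computes_def by blast
  then obtain E where E: "execution qi \<delta> n E" "fair \<delta> n E"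
    using assms(2) by (rule fair_execution_exists)
  have "n \<ge> 1" using assms(2) by simp
  then obtain t where "\<forall>t'\<ge>t. E t' ` {1..n} \<subseteq> Q1"
    using assms(1,3) E unfolding one_aware_computes_def by blast
  then have "E t ` {1..n} \<subseteq> Q1" by blast
  then have "E t 1 \<in> Q1" using \<open>n \<ge> 1\<close> by auto
  moreover have "E t 1 \<in> producible \<delta> qi n"
    using execution_reachable[OF E(1)] \<open>n \<ge> 1\<close> unfolding producible_def by fastforce
  ultimately show ?thesis by blast
qed

theorem theorem2:
  fixes Q Q0 Q1 :: "'q set" and qi :: 'q and \<delta> :: "'q \<Rightarrow> 'q \<Rightarrow> ('q \<times> 'q) set" and d :: nat
  assumes "d \<ge> 1"
    and "one_aware_computes Q Q0 Q1 qi \<delta> (\<lambda>n. n \<ge> d)"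
  shows "real (card Q) \<ge> log 2 (real d) + 1"
proof -
  have pp: "pop_protocol Q Q0 Q1 qi \<delta>" using assms(2) unfolding one_aware_computes_def by blast
  then have disjoint: "Q0 \<inter> Q1 = {}" unfolding pop_protocol_def by blast
  define m where "m = card Q - 1"
  have "d \<le> 2 ^ m"
  proof (rule ccontr)
    assume "\<not> d \<le> 2 ^ m"
    moreover have "(1::nat) \<le> 2 ^ m" by simp
    ultimately have "2 ^ m < d" "d \<ge> 2" by linarith+
    then have "producible \<delta> qi d \<subseteq> Q0"
      using producible_subset_pow2[OF pp, of d] producible_subset_Q0[OF assms(2), of "2 ^ m"]
      unfolding m_def by auto
    then show False
      using producible_meets_Q1[OF assms(2) \<open>d \<ge> 2\<close>] disjoint by auto
  qed
  then have "log 2 (real d) \<le> real m" using assms(1) by (intro log2_of_power_le) simp_all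
  moreover have "card Q \<ge> 1" using pp by (rule pop_protocol_card_ge_1)
  ultimately show ?thesis unfolding m_def by linarith
qed

end
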